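(* Fix $m\ge1$, a partition $\xi$ with all parts $\le m$, $\mu\in\mathbb Z_{\ge0}$, $\mu=\mu_1m+\mu_0$ ($0\le\mu_0<m$), $t=\#\{i:\xi_i=m\}$, and assume $k:=\mu_1+1-t\ge0$. Let $\alpha_0=m-\mu_0-1$ and $\alpha_1,\dots,\alpha_L$ the parts of $\xi$ smaller than $m$ (with multiplicity), so $F_{\xi,m,\mu}(x)=\frac{p_{m-\mu_0-1}(x)p_\xi(x)}{p_m(x)^{\mu_1+1}}=\prod_{i=0}^Lp_{\alpha_i}(x)/p_m(x)^k=\sum_{r\ge0}a_rx^r$. Suppose there exist integers $(a_\nu,b_\nu)$, $1\le\nu\le k$, with $0\le a_\nu,b_\nu\le m-1$ and $a_\nu+b_\nu\le m-1$, such that $\prod_{i=0}^Lp_{\alpha_i}(x)=\prod_{\nu=1}^kp_{a_\nu}(x)p_{b_\nu}(x)$. Then \[ F_{\xi,m,\mu}(x)=\prod_{\nu=1}^k\Big(\sum_{u\ge0}D_m(a_\nu,b_\nu;u)x^u\Big), \] so $a_r$ equals the number of $k$-tuples $(P_1,\dots,P_k)$ with $P_\nu\in\mathcal D_m(a_\nu,b_\nu;u_\nu)$ for some $u_\nu\ge0$ and $u_1+\cdots+u_k=r$; in particular all $a_r\ge0$. Moreover, in each of the following families take $\mu=|\xi|$ (and $s,t\ge 0$ integers; a notation $m^t$ denotes $t$ parts equal to $m$, parts arranged in nonincreasing order): (a) $\xi=(m^t,1^s)$, $s=qm+\rho$ with $q\ge0$, $0\le\rho<m$. For every $N\ge0$,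 $a_N$ equals the number of tuples $(P_0,\dots,P_q)$ with $P_0\in\mathcal D_m(0,m-\rho-1;u_0)$, $P_\nu\in\mathcal D_m(0,0;u_\nu)$ for $1\le\nu\le q$, and $u_0+\cdots+u_q=N$. (b) $\xi=(m^t,r,1^s)$ with $1\le r\le m-1$, $r+s=qm+\rho$, $q\ge0$, $0\le\rho<m$. If $q=0$, then for every $u\ge0$, $a_u=D_m(r,m-r-s-1;u)$, i.e. the number of Dyck paths of height at most $m-1$ and semilength $r+s+u$ whose first $r$ steps are up-steps and whose last $r+s$ steps are down-steps. If $q\ge1$, then for every $N\ge0$, $a_N$ equals the number of tuples $(P_0,\dots,P_q)$ with $P_0\in\mathcal D_m(0,m-\rho-1;u_0)$, $P_1\in\mathcal D_m(r,0;u_1)$, $P_\nu\in\mathcal D_m(0,0;u_\nu)$ for $2\le\nu\le q$, and $u_0+\cdots+u_q=N$. (c) $\xi=(m^t,r_1,\dots,r_d,1^s)$ with $1\le r_i\le m-1$, $r_1+\cdots+r_d+s=qm+\rho$, $q\ge0$, $0\le\rho<m$. If $q\ge d$, then for every $N\ge0$, $a_N$ equals the number of tuples $(P_0,\dots,P_q)$ with $P_0\in\mathcal D_m(0,m-\rho-1;u_0)$, $P_i\in\mathcal D_m(r_i,0;u_i)$ for $1\le i\le d$, $P_\nu\in\mathcal D_m(0,0;u_\nu)$ for $d+1\le\nu\le q$, and $u_0+\cdots+u_q=N$.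
   Context: $p_0=p_1=1$, $p_{r+1}(x)=p_r(x)-xp_{r-1}(x)$ ($r\ge1$); $p_\xi=\prod_ip_{\xi_i}$; $|\xi|$ is the sum of the parts. A Dyck path is a lattice path from $(0,0)$ with steps $U=(1,1)$, $D=(1,-1)$, ending on the $x$-axis and never going below it; its semilength is half its number of steps and its height is the maximal $y$-coordinate reached. For $m\ge1$, $0\le a,b\le m-1$ with $a+b\le m-1$, and $u\ge0$, $\mathcal D_m(a,b;u)$ is the set of Dyck paths of height at most $m-1$ and semilength $m-1-b+u$ whose first $a$ steps are up-steps and whose last $m-1-b$ steps are down-steps; $D_m(a,b;u):=\#\mathcal D_m(a,b;u)$. *)

theory Defs
  imports "HOL-Computational_Algebra.Polynomial" "HOL-Computational_Algebra.Formal_Power_Series"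
    "HOL-Computational_Algebra.Polynomial_FPS"
begin

fun pp :: "nat \<Rightarrow> int poly" where
  "pp 0 = 1"
| "pp (Suc 0) = 1"
| "pp (Suc (Suc r)) = pp (Suc r) - [:0, 1:] * pp r"

definition pxi :: "nat list \<Rightarrow> int poly" where
  "pxi xi = prod_list (map pp xi)"

definition is_partition_le :: "nat \<Rightarrow> nat list \<Rightarrow> bool" where
  "is_partition_le m xi \<longleftrightarrow> sorted_wrt (\<ge>) xi \<and> (\<forall>x\<in>set xi. 1 \<le> x \<and> x \<le> m)"

definition Fser :: "nat \<Rightarrow> nat list \<Rightarrow> nat \<Rightarrow> rat fps" where
  "Fser m xi mu =
     fps_of_poly (map_poly of_int (pp (m - mu mod m - 1) * pxi xi))
     * inverse (fps_of_poly (map_poly of_int (pp m)) ^ (mu div m + 1))"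

text \<open>Lattice paths as lists of steps: True = up-step U, False = down-step D.
  The height after a list of steps.\<close>
definition hgt :: "bool list \<Rightarrow> int" where
  "hgt w = sum_list (map (\<lambda>s. if s then 1 else -1) w)"

definition is_dyck :: "bool list \<Rightarrow> bool" where
  "is_dyck w \<longleftrightarrow> (\<forall>k\<le>length w. hgt (take k w) \<ge> 0) \<and> hgt w = 0"

definition height_le :: "int \<Rightarrow> bool list \<Rightarrow> bool" where
  "height_le h w \<longleftrightarrow> (\<forall>k\<le>length w. hgt (take k w) \<le> h)"

definition dyck_set :: "nat \<Rightarrow> nat \<Rightarrow> nat \<Rightarrow> nat \<Rightarrow> bool list set" where
  "dyck_set m a b u = {w. is_dyck w \<and> height_le (int m - 1) w
      \<and> length w = 2 * (m - 1 - b + u)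
      \<and> take a w = replicate a True
      \<and> drop (length w - (m - 1 - b)) w = replicate (m - 1 - b) False}"

definition Dcount :: "nat \<Rightarrow> nat \<Rightarrow> nat \<Rightarrow> nat \<Rightarrow> nat" where
  "Dcount m a b u = card (dyck_set m a b u)"

end

theory Submission
  imports Defs
begin

(*
  Strip the forced initial up-run and final down-run from a path in D_m(a, b; u): what is left is
  a walk in the strip of heights 0, ..., m - 1 from height a to height m - 1 - b with exactly u
  down-steps. Marking down-steps by x and splitting off the first step, the generating functions
  G_i of walks from height i to a fixed height j solve G_i = [i = j] + G_(i+1) + x G_(i-1)
  (terms leaving the strip omitted), and this system has only one power series solution. By the
  three-term recurrence and the addition formula p_(a+b+2) = p_(a+1) p_(b+1) - x p_a p_b, the
  series p_min(i,j) p_(m-1-max(i,j)) x^(i-j)_+ / p_m solve it too. Hence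
  sum_u D_m(a, b; u) x^u = p_a p_b / p_m, and after cancelling the factors p_m of p_xi,
  F_(xi,m,mu) is the product of k such series; the coefficients of a product of generating
  functions count tuples whose gradings add up. The families (a)-(c) are the instances with the
  pairs (0, m - rho - 1), (r_i, 0) and (0, 0), using p_0 = p_1 = 1.
*)

unbundle fps_syntax

section \<open>The polynomials p_k as power series\<close>

definition fps_of_ipoly :: "int poly \<Rightarrow> rat fps" where
  "fps_of_ipoly p = fps_of_poly (map_poly of_int p)"

lemma fps_of_ipoly_nth: "fps_of_ipoly p $ n = of_int (coeff p n)"
  by (simp add: fps_of_ipoly_def coeff_map_poly)

lemma fps_of_ipoly_mult: "fps_of_ipoly (p * q) = fps_of_ipoly p * fps_of_ipoly q"
  by (rule fps_ext) (simp add: fps_of_ipoly_nth coeff_mult fps_mult_nth atLeast0AtMost)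

lemma fps_of_ipoly_diff: "fps_of_ipoly (p - q) = fps_of_ipoly p - fps_of_ipoly q"
  by (rule fps_ext) (simp add: fps_of_ipoly_nth)

lemma fps_of_ipoly_1 [simp]: "fps_of_ipoly 1 = 1"
  by (simp add: fps_of_ipoly_def)

lemma fps_of_ipoly_X: "fps_of_ipoly [:0, 1:] = fps_X"
  by (rule fps_ext) (simp add: fps_of_ipoly_nth fps_X_def coeff_pCons split: nat.split)

lemma fps_of_ipoly_power: "fps_of_ipoly (p ^ n) = fps_of_ipoly p ^ n"
  by (induction n) (simp_all add: fps_of_ipoly_mult)

definition pfps :: "nat \<Rightarrow> rat fps" where
  "pfps k = fps_of_ipoly (pp k)"

lemma pfps_0 [simp]: "pfps 0 = 1" and pfps_1 [simp]: "pfps (Suc 0) = 1"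
  by (simp_all add: pfps_def)

lemma pfps_Suc_Suc: "pfps (Suc (Suc k)) = pfps (Suc k) - fps_X * pfps k"
  unfolding pfps_def pp.simps(3) fps_of_ipoly_diff fps_of_ipoly_mult fps_of_ipoly_X ..

lemma pfps_recurrence: "pfps k = pfps (Suc k) + (if k = 0 then 0 else fps_X * pfps (k - 1))"
  by (cases k) (simp_all add: pfps_Suc_Suc)

lemma pfps_nth_0: "pfps k $ 0 = 1"
  by (induction k rule: pp.induct) (simp_all add: pfps_Suc_Suc)

lemma pfps_mult_inverse [simp]: "pfps k * inverse (pfps k) = 1"
  by (rule inverse_mult_eq_1') (simp add: pfps_nth_0)

lemma pfps_add: "pfps (Suc a + Suc b) = pfps (Suc a) * pfps (Suc b) - fps_X * pfps a * pfps b"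
proof (induction b rule: pp.induct)
  case 1
  show ?case by (simp add: pfps_Suc_Suc)
next
  case 2
  show ?case by (simp add: pfps_Suc_Suc algebra_simps)
next
  case (3 r)
  have "pfps (Suc a + Suc (Suc (Suc r)))
      = pfps (Suc a + Suc (Suc r)) - fps_X * pfps (Suc a + Suc r)"
    using pfps_Suc_Suc[of "Suc a + Suc r"] by simp
  also have "\<dots> = pfps (Suc a) * (pfps (Suc (Suc r)) - fps_X * pfps (Suc r))
      - fps_X * pfps a * (pfps (Suc r) - fps_X * pfps r)"
    unfolding 3 by (simp add: algebra_simps)
  finally show ?case unfolding pfps_Suc_Suc .
qed

section \<open>Walks in a strip\<close>

lemma hgt_Nil [simp]: "hgt [] = 0"
  and hgt_Cons [simp]: "hgt (s # w) = (if s then 1 else -1) + hgt w"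
  and hgt_append [simp]: "hgt (v @ w) = hgt v + hgt w"
  by (simp_all add: hgt_def)

lemma hgt_replicate_True [simp]: "hgt (replicate n True) = int n"
  and hgt_replicate_False [simp]: "hgt (replicate n False) = - int n"
  by (induction n) simp_all

lemma length_eq_hgt_plus_downs: "int (length w) = hgt w + 2 * int (length (filter Not w))"
  by (induction w) auto

fun in_strip :: "nat \<Rightarrow> int \<Rightarrow> bool list \<Rightarrow> bool" where
  "in_strip m i [] = True"
| "in_strip m i (s # w) \<longleftrightarrow> 0 \<le> i + (if s then 1 else -1) \<and> i + (if s then 1 else -1) < int m
     \<and> in_strip m (i + (if s then 1 else -1)) w"

lemma in_strip_append: "in_strip m i (v @ w) \<longleftrightarrow> in_strip m i v \<and> in_strip m (i + hgt v) w"
  by (induction v arbitrary: i) (auto simp: add.assoc)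

lemma in_strip_replicate_True: "0 \<le> i \<Longrightarrow> i + int n < int m \<Longrightarrow> in_strip m i (replicate n True)"
  by (induction n arbitrary: i) auto

lemma in_strip_replicate_False: "int n \<le> i \<Longrightarrow> i < int m \<Longrightarrow> in_strip m i (replicate n False)"
  by (induction n arbitrary: i) auto

lemma in_strip_iff_prefixes:
  assumes "0 \<le> i" "i < int m"
  shows "in_strip m i w \<longleftrightarrow> (\<forall>k\<le>length w. 0 \<le> i + hgt (take k w) \<and> i + hgt (take k w) < int m)"
  using assms
proof (induction w arbitrary: i)
  case (Cons s w)
  define i' where "i' = i + (if s then 1 else -1)"
  have "(\<forall>k\<le>length (s # w). 0 \<le> i + hgt (take k (s # w)) \<and> i + hgt (take k (s # w)) < int m)
     \<longleftrightarrow> (\<forall>k\<le>length w. 0 \<le> i' + hgt (take k w) \<and> i' + hgt (take k w) < int m)"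
    using Cons.prems by (auto simp: i'_def add.assoc All_less_Suc2 take_Cons' simp flip: less_Suc_eq_le)
  moreover have "(\<forall>k\<le>length w. 0 \<le> i' + hgt (take k w) \<and> i' + hgt (take k w) < int m)
     \<Longrightarrow> 0 \<le> i' \<and> i' < int m"
    by (metis add.right_neutral hgt_Nil le0 take0)
  moreover have "in_strip m i (s # w) \<longleftrightarrow> 0 \<le> i' \<and> i' < int m \<and> in_strip m i' w"
    by (simp add: i'_def)
  ultimately show ?case using Cons.IH[of i'] by blast
qed simp

definition strip_walks :: "nat \<Rightarrow> nat \<Rightarrow> nat \<Rightarrow> nat \<Rightarrow> bool list set" where
  "strip_walks m i j u =
     {w. in_strip m (int i) w \<and> int i + hgt w = int j \<and> length (filter Not w) = u}"

lemma finite_strip_walks: "finite (strip_walks m i j u)"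
proof (rule finite_subset)
  show "strip_walks m i j u \<subseteq> {w. set w \<subseteq> UNIV \<and> length w = nat (int j - int i + 2 * int u)}"
  proof
    fix w assume "w \<in> strip_walks m i j u"
    then show "w \<in> {w. set w \<subseteq> UNIV \<and> length w = nat (int j - int i + 2 * int u)}"
      using length_eq_hgt_plus_downs[of w] by (simp add: strip_walks_def) linarith
  qed
qed (rule finite_lists_length_eq, simp)

lemma strip_walks_first_step:
  assumes "i < m"
  shows "strip_walks m i j u =
      (if i = j \<and> u = 0 then {[]} else {})
    \<union> (if Suc i < m then Cons True ` strip_walks m (Suc i) j u else {})
    \<union> (if 0 < i \<and> 0 < u then Cons False ` strip_walks m (i - 1) j (u - 1) else {})"
proof (intro equalityI subsetI)
  fix w assume w: "w \<in> strip_walks m i j u"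
  show "w \<in> (if i = j \<and> u = 0 then {[]} else {})
    \<union> (if Suc i < m then Cons True ` strip_walks m (Suc i) j u else {})
    \<union> (if 0 < i \<and> 0 < u then Cons False ` strip_walks m (i - 1) j (u - 1) else {})"
  proof (cases w)
    case Nil
    then show ?thesis using w by (simp add: strip_walks_def)
  next
    case (Cons s v)
    then show ?thesis using w
      by (cases s) (auto simp: strip_walks_def of_nat_diff algebra_simps)
  qed
next
  fix w assume "w \<in> (if i = j \<and> u = 0 then {[]} else {})
    \<union> (if Suc i < m then Cons True ` strip_walks m (Suc i) j u else {})
    \<union> (if 0 < i \<and> 0 < u then Cons False ` strip_walks m (i - 1) j (u - 1) else {})"
  then show "w \<in> strip_walks m i j u"
    using assms by (auto simp: strip_walks_def of_nat_diff algebra_simps split: if_splits)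
qed

lemma card_strip_walks_first_step:
  assumes "i < m"
  shows "card (strip_walks m i j u) =
      (if i = j \<and> u = 0 then 1 else 0)
    + (if Suc i < m then card (strip_walks m (Suc i) j u) else 0)
    + (if 0 < i \<and> 0 < u then card (strip_walks m (i - 1) j (u - 1)) else 0)"
proof -
  let ?A = "if i = j \<and> u = 0 then {[]} else {}"
  let ?B = "if Suc i < m then Cons True ` strip_walks m (Suc i) j u else {}"
  let ?C = "if 0 < i \<and> 0 < u then Cons False ` strip_walks m (i - 1) j (u - 1) else {}"
  have "card (strip_walks m i j u) = card (?A \<union> ?B \<union> ?C)"
    unfolding strip_walks_first_step[OF assms] ..
  also have "\<dots> = card ?A + card ?B + card ?C"
    by (auto simp: finite_strip_walks card_insert_if intro!: card_Un_disjoint)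
  also have "card ?A = (if i = j \<and> u = 0 then 1 else 0)"
    by simp
  also have "card ?B = (if Suc i < m then card (strip_walks m (Suc i) j u) else 0)"
    by (simp add: card_image)
  also have "card ?C = (if 0 < i \<and> 0 < u then card (strip_walks m (i - 1) j (u - 1)) else 0)"
    by (simp add: card_image)
  finally show ?thesis .
qed

definition walk_gf :: "nat \<Rightarrow> nat \<Rightarrow> nat \<Rightarrow> rat fps" where
  "walk_gf m i j = Abs_fps (\<lambda>u. of_nat (card (strip_walks m i j u)))"

lemma walk_gf_first_step:
  assumes "i < m"
  shows "walk_gf m i j = (if i = j then 1 else 0)
    + (if Suc i < m then walk_gf m (Suc i) j else 0)
    + (if 0 < i then fps_X * walk_gf m (i - 1) j else 0)"
  by (rule fps_ext) (subst walk_gf_def, subst card_strip_walks_first_step[OF assms],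
      auto simp: walk_gf_def fps_X_mult_nth)

definition walk_gf_numer :: "nat \<Rightarrow> nat \<Rightarrow> nat \<Rightarrow> rat fps" where
  "walk_gf_numer m i j = pfps (min i j) * pfps (m - 1 - max i j) * fps_X ^ (i - j)"

lemma walk_gf_numer_first_step:
  assumes "i < m" "j < m"
  shows "walk_gf_numer m i j = (if i = j then pfps m else 0)
    + (if Suc i < m then walk_gf_numer m (Suc i) j else 0)
    + (if 0 < i then fps_X * walk_gf_numer m (i - 1) j else 0)"
proof (cases i j rule: linorder_cases)
  case less
  then show ?thesis
    using assms pfps_recurrence[of i]
    by (auto simp: walk_gf_numer_def min_def max_def algebra_simps)
next
  case greater
  define k where "k = m - 1 - i"
  define d where "d = i - j - 1"
  have d: "i = j + Suc d" using greater by (simp add: d_def)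
  have "walk_gf_numer m i j = pfps j * pfps k * fps_X ^ Suc d"
    using d by (simp add: walk_gf_numer_def k_def)
  moreover have "Suc i < m \<Longrightarrow> walk_gf_numer m (Suc i) j = pfps j * pfps (k - 1) * fps_X ^ Suc (Suc d)"
    using d by (simp add: walk_gf_numer_def k_def)
  moreover have "walk_gf_numer m (i - 1) j = pfps j * pfps (Suc k) * fps_X ^ d"
    using d assms by (simp add: walk_gf_numer_def k_def Suc_diff_Suc)
  moreover have "Suc i < m \<longleftrightarrow> k \<noteq> 0"
    using assms by (auto simp: k_def)
  ultimately show ?thesis
    using greater pfps_recurrence[of k] by (auto simp: algebra_simps)
next
  case equal
  define k where "k = m - 1 - i"
  have m: "m = Suc i + k" using assms by (simp add: k_def)
  have "pfps i * pfps k = pfps m + (if k = 0 then 0 else fps_X * pfps i * pfps (k - 1))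
      + (if i = 0 then 0 else fps_X * pfps (i - 1) * pfps k)"
  proof (cases k)
    case 0
    then show ?thesis using m pfps_recurrence[of i] by simp
  next
    case (Suc c)
    then show ?thesis using m pfps_add[of i c] pfps_recurrence[of i] by (simp add: algebra_simps)
  qed
  then show ?thesis
    using equal assms by (auto simp: walk_gf_numer_def k_def algebra_simps)
qed

lemma fps_strip_system_unique:
  fixes E :: "nat \<Rightarrow> 'a :: comm_ring_1 fps"
  assumes system: "\<And>i. i < m \<Longrightarrow>
      E i = (if Suc i < m then E (Suc i) else 0) + (if 0 < i then fps_X * E (i - 1) else 0)"
    and "i < m"
  shows "E i = 0"
proof -
  have "\<forall>i<m. E i $ n = 0" for n
  proof (induction n rule: less_induct)
    case (less n)
    have coeff_step: "E i $ n = (if Suc i < m then E (Suc i) $ n else 0)" if "i < m" for i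
      using system[OF that] less that by (auto simp: fps_X_mult_nth)
    show ?case
    proof (intro allI impI)
      fix i assume "i < m"
      then have "i \<le> m - 1" by simp
      then show "E i $ n = 0"
      proof (induction i rule: inc_induct)
        case base
        show ?case using coeff_step[of "m - 1"] \<open>i < m\<close> by simp
      next
        case (step k)
        then show ?case using coeff_step[of k] by simp
      qed
    qed
  qed
  then show ?thesis using \<open>i < m\<close> by (intro fps_ext) simp
qed

lemma walk_gf_eq:
  assumes "i < m" "j < m"
  shows "walk_gf m i j = walk_gf_numer m i j * inverse (pfps m)"
proof -
  define E where "E i = walk_gf m i j - walk_gf_numer m i j * inverse (pfps m)" for i
  have "E i = (if Suc i < m then E (Suc i) else 0) + (if 0 < i then fps_X * E (i - 1) else 0)"
    if "i < m" for i
  proof -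
    have "walk_gf_numer m i j * inverse (pfps m) = (if i = j then 1 else 0)
       + (if Suc i < m then walk_gf_numer m (Suc i) j * inverse (pfps m) else 0)
       + (if 0 < i then fps_X * (walk_gf_numer m (i - 1) j * inverse (pfps m)) else 0)"
      by (subst walk_gf_numer_first_step[OF that assms(2)]) (simp add: algebra_simps)
    then show ?thesis
      unfolding E_def by (subst walk_gf_first_step[OF that]) (simp add: algebra_simps)
  qed
  then have "E i = 0" using assms(1) by (rule fps_strip_system_unique)
  then show ?thesis by (simp add: E_def)
qed

section \<open>Dyck paths with forced initial and final runs\<close>

lemma dyck_set_eq_image:
  assumes "a + b < m"
  shows "dyck_set m a b u
    = (\<lambda>v. replicate a True @ v @ replicate (m - 1 - b) False) ` strip_walks m a (m - 1 - b) u"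
    (is "_ = ?f ` strip_walks m a ?h u")
proof (intro equalityI subsetI)
  fix w assume "w \<in> dyck_set m a b u"
  then have w: "is_dyck w" "height_le (int m - 1) w" "length w = 2 * (?h + u)"
    "take a w = replicate a True" "drop (length w - ?h) w = replicate ?h False"
    unfolding dyck_set_def by auto
  define v where "v = drop a (take (length w - ?h) w)"
  have "w = take a w @ v @ drop (length w - ?h) w"
  proof -
    have "a \<le> length w - ?h" using w(3) assms by simp
    then have "take a (take (length w - ?h) w) = take a w" by (simp add: min_def)
    then have "take (length w - ?h) w = take a w @ v" unfolding v_def by (metis append_take_drop_id)
    then show ?thesis by (metis append.assoc append_take_drop_id)
  qed
  then have w_eq: "w = ?f v" using w(4,5) by simp
  have "in_strip m 0 w" "hgt w = 0"
    using w(1,2) assms in_strip_iff_prefixes[of 0 m w] unfolding is_dyck_def height_le_def by auto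
  then have "in_strip m (int a) v" "int a + hgt v = int ?h"
    unfolding w_eq in_strip_append by (auto simp: add.assoc)
  moreover have "length (filter Not v) = u"
    using length_eq_hgt_plus_downs[of w] w(3) \<open>hgt w = 0\<close> w_eq by simp
  ultimately show "w \<in> ?f ` strip_walks m a ?h u"
    using w_eq by (auto simp: strip_walks_def)
next
  fix w assume "w \<in> ?f ` strip_walks m a ?h u"
  then obtain v where v: "w = ?f v" "in_strip m (int a) v" "int a + hgt v = int ?h"
    "length (filter Not v) = u"
    unfolding strip_walks_def by auto
  have "in_strip m 0 w"
    unfolding v(1) in_strip_append using v assms
    by (auto intro!: in_strip_replicate_True in_strip_replicate_False simp: add.assoc)
  moreover have "hgt w = 0" using v by simp
  ultimately have "is_dyck w" "height_le (int m - 1) w"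
    using in_strip_iff_prefixes[of 0 m w] assms unfolding is_dyck_def height_le_def by auto
  moreover have "length w = 2 * (?h + u)"
    using length_eq_hgt_plus_downs[of v] v assms by simp
  moreover have "drop (length w - ?h) w = replicate ?h False"
    using v(1) by simp
  ultimately show "w \<in> dyck_set m a b u" using v(1) by (simp add: dyck_set_def)
qed

lemma Dcount_eq_card_strip_walks:
  assumes "a + b < m"
  shows "Dcount m a b u = card (strip_walks m a (m - 1 - b) u)"
  unfolding Dcount_def dyck_set_eq_image[OF assms] by (rule card_image) (simp add: inj_on_def)

lemma finite_dyck_set: "a + b < m \<Longrightarrow> finite (dyck_set m a b u)"
  by (simp add: dyck_set_eq_image finite_strip_walks)

definition dyck_gf :: "nat \<Rightarrow> nat \<Rightarrow> nat \<Rightarrow> rat fps" where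
  "dyck_gf m a b = Abs_fps (\<lambda>u. of_nat (Dcount m a b u))"

lemma dyck_gf_eq:
  assumes "a + b < m"
  shows "dyck_gf m a b = pfps a * pfps b * inverse (pfps m)"
proof -
  have "dyck_gf m a b = walk_gf m a (m - 1 - b)"
    unfolding dyck_gf_def walk_gf_def Dcount_eq_card_strip_walks[OF assms] ..
  also have "\<dots> = walk_gf_numer m a (m - 1 - b) * inverse (pfps m)"
    using assms by (intro walk_gf_eq) auto
  also have "walk_gf_numer m a (m - 1 - b) = pfps a * pfps b"
    using assms by (simp add: walk_gf_numer_def min_def max_def)
  finally show ?thesis .
qed

section \<open>Tuples of graded objects\<close>

definition graded_tuples :: "(nat \<Rightarrow> 'a set) list \<Rightarrow> nat \<Rightarrow> 'a list set" where
  "graded_tuples As r = {Ps. length Ps = length As \<and> (\<exists>us. length us = length As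
     \<and> (\<forall>\<nu><length As. Ps ! \<nu> \<in> (As ! \<nu>) (us ! \<nu>)) \<and> sum_list us = r)}"

lemma graded_tuples_Nil: "graded_tuples [] r = (if r = 0 then {[]} else {})"
  by (auto simp: graded_tuples_def)

lemma graded_tuples_Cons:
  "graded_tuples (A # As) r = (\<Union>i\<le>r. (\<lambda>(P, Ps). P # Ps) ` (A i \<times> graded_tuples As (r - i)))"
proof (intro equalityI subsetI)
  fix x assume "x \<in> graded_tuples (A # As) r"
  then obtain us where x: "length x = Suc (length As)" "length us = Suc (length As)"
    "\<forall>\<nu><Suc (length As). x ! \<nu> \<in> ((A # As) ! \<nu>) (us ! \<nu>)" "sum_list us = r"
    unfolding graded_tuples_def by auto
  obtain P Ps where P: "x = P # Ps" using x(1) by (cases x) auto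
  obtain u us' where u: "us = u # us'" using x(2) by (cases us) auto
  have "P \<in> A u" using x(3) P u by force
  moreover have "Ps \<in> graded_tuples As (r - u)"
    unfolding graded_tuples_def using x P u by (auto simp: All_less_Suc2 intro!: exI[of _ us'])
  moreover have "u \<le> r" using x(4) u by simp
  ultimately show "x \<in> (\<Union>i\<le>r. (\<lambda>(P, Ps). P # Ps) ` (A i \<times> graded_tuples As (r - i)))"
    using P by blast
next
  fix x assume "x \<in> (\<Union>i\<le>r. (\<lambda>(P, Ps). P # Ps) ` (A i \<times> graded_tuples As (r - i)))"
  then obtain i P Ps where x: "i \<le> r" "x = P # Ps" "P \<in> A i" "Ps \<in> graded_tuples As (r - i)"
    by auto
  then obtain us where "length Ps = length As" "length us = length As"
     "\<forall>\<nu><length As. Ps ! \<nu> \<in> (As ! \<nu>) (us ! \<nu>)" "sum_list us = r - i"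
    unfolding graded_tuples_def by auto
  then show "x \<in> graded_tuples (A # As) r"
    unfolding graded_tuples_def using x by (auto simp: All_less_Suc2 intro!: exI[of _ "i # us"])
qed

lemma finite_graded_tuples:
  "\<forall>A\<in>set As. \<forall>u. finite (A u) \<Longrightarrow> finite (graded_tuples As r)"
  by (induction As arbitrary: r) (auto simp: graded_tuples_Nil graded_tuples_Cons)

lemma card_graded_tuples:
  assumes "\<forall>A\<in>set As. \<forall>u. finite (A u)"
    and "\<forall>A\<in>set As. \<forall>u u'. u \<noteq> u' \<longrightarrow> A u \<inter> A u' = {}"
  shows "(of_nat (card (graded_tuples As r)) :: 'b :: comm_semiring_1)
      = prod_list (map (\<lambda>A. Abs_fps (\<lambda>u. of_nat (card (A u)))) As) $ r"
  using assms
proof (induction As arbitrary: r)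
  case Nil
  then show ?case by (simp add: graded_tuples_Nil)
next
  case (Cons A As)
  let ?G = "\<lambda>i. (\<lambda>(P, Ps). P # Ps) ` (A i \<times> graded_tuples As (r - i))"
  have fin: "finite (?G i)" for i
    using Cons.prems by (simp add: finite_graded_tuples)
  have disj: "?G i \<inter> ?G j = {}" if "i \<noteq> j" for i j
    using Cons.prems that by fastforce
  have "card (graded_tuples (A # As) r) = (\<Sum>i\<le>r. card (?G i))"
    unfolding graded_tuples_Cons by (rule card_UN_disjoint) (simp_all add: fin disj)
  also have "\<dots> = (\<Sum>i\<le>r. card (A i) * card (graded_tuples As (r - i)))"
    by (simp add: card_image inj_on_def card_cartesian_product)
  finally show ?case
    using Cons by (simp add: fps_mult_nth atLeast0AtMost)
qed

section \<open>Factorization of F\<close>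

lemma pxi_eq_top_parts:
  "\<forall>x\<in>set xs. x \<le> m \<Longrightarrow>
    pxi xs = pp m ^ length (filter (\<lambda>x. x = m) xs) * pxi (filter (\<lambda>x. x < m) xs)"
  by (induction xs) (auto simp: pxi_def)

lemma Fser_eq:
  assumes "\<forall>x\<in>set xi. x \<le> m" and "length (filter (\<lambda>x. x = m) xi) \<le> mu div m + 1"
  shows "Fser m xi mu = fps_of_ipoly (pp (m - mu mod m - 1) * pxi (filter (\<lambda>x. x < m) xi))
      * inverse (pfps m) ^ (mu div m + 1 - length (filter (\<lambda>x. x = m) xi))"
proof -
  let ?t = "length (filter (\<lambda>x. x = m) xi)"
  let ?K = "mu div m + 1"
  let ?N = "pp (m - mu mod m - 1) * pxi (filter (\<lambda>x. x < m) xi)"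
  have "Fser m xi mu = fps_of_ipoly (pp (m - mu mod m - 1) * pxi xi) * inverse (pfps m) ^ ?K"
    unfolding Fser_def fps_of_ipoly_def[symmetric] pfps_def[symmetric] fps_inverse_power ..
  also have "fps_of_ipoly (pp (m - mu mod m - 1) * pxi xi) = fps_of_ipoly ?N * pfps m ^ ?t"
    unfolding pxi_eq_top_parts[OF assms(1)]
    by (simp add: fps_of_ipoly_mult fps_of_ipoly_power pfps_def algebra_simps)
  also have "inverse (pfps m) ^ ?K = inverse (pfps m) ^ ?t * inverse (pfps m) ^ (?K - ?t)"
    using assms(2) by (simp flip: power_add)
  also have "fps_of_ipoly ?N * pfps m ^ ?t * (inverse (pfps m) ^ ?t * inverse (pfps m) ^ (?K - ?t))
      = fps_of_ipoly ?N * (pfps m * inverse (pfps m)) ^ ?t * inverse (pfps m) ^ (?K - ?t)"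
    by (simp only: power_mult_distrib mult.assoc)
  finally show ?thesis by (simp only: pfps_mult_inverse power_one mult_1_right)
qed

lemma prod_dyck_gf_eq:
  assumes "\<forall>(a, b)\<in>set ab. a + b < m"
  shows "prod_list (map (\<lambda>(a, b). dyck_gf m a b) ab)
      = fps_of_ipoly (prod_list (map (\<lambda>(a, b). pp a * pp b) ab)) * inverse (pfps m) ^ length ab"
  using assms
  by (induction ab) (auto simp: dyck_gf_eq fps_of_ipoly_mult pfps_def algebra_simps)

lemma coeff_prod_dyck_gf:
  assumes "\<forall>(a, b)\<in>set ab. a + b < m"
  shows "prod_list (map (\<lambda>(a, b). dyck_gf m a b) ab) $ r
     = of_nat (card {Ps :: bool list list. length Ps = length ab \<and>
         (\<exists>us :: nat list. length us = length ab
            \<and> (\<forall>\<nu> < length ab. Ps ! \<nu> \<in> dyck_set m (fst (ab ! \<nu>)) (snd (ab ! \<nu>)) (us ! \<nu>))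
            \<and> sum_list us = r)})"
proof -
  define As where "As = map (\<lambda>(a, b). dyck_set m a b) ab"
  have fin: "\<forall>A\<in>set As. \<forall>u. finite (A u)"
    using assms finite_dyck_set unfolding As_def by auto
  have disj: "\<forall>A\<in>set As. \<forall>u u'. u \<noteq> u' \<longrightarrow> A u \<inter> A u' = {}"
    unfolding As_def by (auto simp: dyck_set_def)
  have "prod_list (map (\<lambda>(a, b). dyck_gf m a b) ab)
      = prod_list (map (\<lambda>A. Abs_fps (\<lambda>u. of_nat (card (A u)))) As)"
    unfolding As_def by (simp add: dyck_gf_def Dcount_def o_def split_def)
  also have "\<dots> $ r = of_nat (card (graded_tuples As r))"
    by (rule card_graded_tuples[OF fin disj, symmetric])
  also have "graded_tuples As r = {Ps :: bool list list. length Ps = length ab \<and>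
         (\<exists>us :: nat list. length us = length ab
            \<and> (\<forall>\<nu> < length ab. Ps ! \<nu> \<in> dyck_set m (fst (ab ! \<nu>)) (snd (ab ! \<nu>)) (us ! \<nu>))
            \<and> sum_list us = r)}"
    unfolding graded_tuples_def As_def by (simp add: case_prod_beta)
  finally show ?thesis .
qed

lemma Fser_eq_prod_dyck_gf:
  assumes "\<forall>x\<in>set xi. x \<le> m"
    and "length (filter (\<lambda>x. x = m) xi) \<le> mu div m + 1"
    and "length ab = mu div m + 1 - length (filter (\<lambda>x. x = m) xi)"
    and "\<forall>(a, b)\<in>set ab. a + b < m"
    and "pp (m - mu mod m - 1) * pxi (filter (\<lambda>x. x < m) xi)
      = prod_list (map (\<lambda>(a, b). pp a * pp b) ab)"
  shows "Fser m xi mu = prod_list (map (\<lambda>(a, b). dyck_gf m a b) ab)"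
  using Fser_eq[OF assms(1,2)] prod_dyck_gf_eq[OF assms(4)] assms(3,5) by simp

lemma Fser_family:
  fixes t :: nat
  assumes "1 \<le> m" and parts: "\<forall>x\<in>set rs. 1 \<le> x \<and> x < m"
    and sum: "sum_list rs + s = q * m + \<rho>" and "\<rho> < m"
  defines "xi \<equiv> replicate t m @ rs @ replicate s 1"
  shows "Fser m xi (sum_list xi) = fps_of_ipoly (pp (m - \<rho> - 1) * pxi rs) * inverse (pfps m) ^ (q + 1)"
proof -
  have "sum_list xi = (t + q) * m + \<rho>"
    using sum by (simp add: xi_def sum_list_replicate algebra_simps)
  then have div: "sum_list xi div m = t + q" and mod: "sum_list xi mod m = \<rho>"
    using \<open>\<rho> < m\<close> by simp_all
  have le: "\<forall>x\<in>set xi. x \<le> m" using parts \<open>1 \<le> m\<close> by (auto simp: xi_def)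
  show ?thesis
  proof (cases "m = 1")
    case True
    \<comment> \<open>The parts 1 are now parts equal to m, so the exponent is 1 rather than q + 1;
      this is harmless since p_1 = 1.\<close>
    then have "rs = []" using parts by (cases rs) auto
    then have "filter (\<lambda>x. x < m) xi = []" "length (filter (\<lambda>x. x = m) xi) = t + q"
      using sum True \<open>\<rho> < m\<close> by (simp_all add: xi_def)
    then show ?thesis
      using Fser_eq[OF le] div mod True \<open>rs = []\<close> by (simp add: pfps_def pxi_def)
  next
    case False
    then have "filter (\<lambda>x. x < m) xi = rs @ replicate s 1"
      and "filter (\<lambda>x. x = m) xi = replicate t m"
      using parts \<open>1 \<le> m\<close> by (auto simp: xi_def filter_id_conv filter_empty_conv)
    moreover have "pxi (rs @ replicate s 1) = pxi rs"
      by (simp add: pxi_def)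
    ultimately show ?thesis
      using Fser_eq[OF le] div mod by simp
  qed
qed

section \<open>The families (a)-(c)\<close>

lemma all_less_Suc_split:
  assumes "l \<le> q"
  shows "(\<forall>\<nu><Suc q. P \<nu>) \<longleftrightarrow> P 0 \<and> (\<forall>i\<in>{1..l}. P i) \<and> (\<forall>\<nu>\<in>{l + 1..q}. P \<nu>)"
proof -
  have "{..<Suc q} = {0} \<union> {1..l} \<union> {l + 1..q}"
    using assms by auto
  then have "(\<forall>\<nu>\<in>{..<Suc q}. P \<nu>) \<longleftrightarrow> (\<forall>\<nu>\<in>{0} \<union> {1..l} \<union> {l + 1..q}. P \<nu>)"
    by (simp only:)
  then show ?thesis
    unfolding ball_Un by (simp add: lessThan_def Ball_def)
qed

definition family_pairs :: "nat \<Rightarrow> nat list \<Rightarrow> nat \<Rightarrow> nat \<Rightarrow> (nat \<times> nat) list" where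
  "family_pairs m rs q \<rho> = (0, m - \<rho> - 1) # map (\<lambda>r. (r, 0)) rs @ replicate (q - length rs) (0, 0)"

lemma length_family_pairs: "length rs \<le> q \<Longrightarrow> length (family_pairs m rs q \<rho>) = q + 1"
  by (simp add: family_pairs_def)

lemma nth_family_pairs:
  assumes "length rs \<le> q" "\<nu> \<le> q"
  shows "family_pairs m rs q \<rho> ! \<nu> =
    (if \<nu> = 0 then (0, m - \<rho> - 1) else if \<nu> \<le> length rs then (rs ! (\<nu> - 1), 0) else (0, 0))"
  using assms by (cases \<nu>) (auto simp: family_pairs_def nth_append)

lemma family_pairs_bounded:
  "1 \<le> m \<Longrightarrow> \<forall>x\<in>set rs. x < m \<Longrightarrow> \<forall>(a, b)\<in>set (family_pairs m rs q \<rho>). a + b < m"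
  by (auto simp: family_pairs_def)

lemma Fser_family_eq_prod_dyck_gf:
  fixes t :: nat
  assumes "1 \<le> m" "\<forall>x\<in>set rs. 1 \<le> x \<and> x < m"
    and "sum_list rs + s = q * m + \<rho>" "\<rho> < m" "length rs \<le> q"
  defines "xi \<equiv> replicate t m @ rs @ replicate s 1"
  shows "Fser m xi (sum_list xi) = prod_list (map (\<lambda>(a, b). dyck_gf m a b) (family_pairs m rs q \<rho>))"
proof -
  have "\<forall>(a, b)\<in>set (family_pairs m rs q \<rho>). a + b < m"
    using family_pairs_bounded[of m rs q \<rho>] assms(1,2) by simp
  moreover have "prod_list (map (\<lambda>(a, b). pp a * pp b) (family_pairs m rs q \<rho>))
      = pp (m - \<rho> - 1) * pxi rs"
    by (simp add: family_pairs_def pxi_def o_def)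
  ultimately show ?thesis
    using Fser_family[OF assms(1-4)] prod_dyck_gf_eq length_family_pairs[OF assms(5)]
    unfolding xi_def by simp
qed

lemma family_tuples_eq:
  fixes m \<rho> :: nat
  assumes "length rs \<le> q"
  defines "ab \<equiv> family_pairs m rs q \<rho>"
  shows "{Ps :: bool list list. length Ps = length ab \<and>
         (\<exists>us :: nat list. length us = length ab
            \<and> (\<forall>\<nu> < length ab. Ps ! \<nu> \<in> dyck_set m (fst (ab ! \<nu>)) (snd (ab ! \<nu>)) (us ! \<nu>))
            \<and> sum_list us = N)}
    = {Ps :: bool list list. length Ps = q + 1 \<and>
         (\<exists>us :: nat list. length us = q + 1
            \<and> Ps ! 0 \<in> dyck_set m 0 (m - \<rho> - 1) (us ! 0)
            \<and> (\<forall>i \<in> {1..length rs}. Ps ! i \<in> dyck_set m (rs ! (i - 1)) 0 (us ! i))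
            \<and> (\<forall>\<nu> \<in> {length rs + 1..q}. Ps ! \<nu> \<in> dyck_set m 0 0 (us ! \<nu>))
            \<and> sum_list us = N)}"
proof -
  have "(\<forall>\<nu> < Suc q. Ps ! \<nu> \<in> dyck_set m (fst (ab ! \<nu>)) (snd (ab ! \<nu>)) (us ! \<nu>))
    \<longleftrightarrow> Ps ! 0 \<in> dyck_set m 0 (m - \<rho> - 1) (us ! 0)
      \<and> (\<forall>i \<in> {1..length rs}. Ps ! i \<in> dyck_set m (rs ! (i - 1)) 0 (us ! i))
      \<and> (\<forall>\<nu> \<in> {length rs + 1..q}. Ps ! \<nu> \<in> dyck_set m 0 0 (us ! \<nu>))" for Ps us
    unfolding all_less_Suc_split[OF assms(1)] using assms(1)
    by (auto simp: ab_def nth_family_pairs)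
  then show ?thesis
    using length_family_pairs[OF assms(1)] by (simp add: ab_def)
qed

lemma Fser_family_nth:
  assumes "1 \<le> m" "\<forall>x\<in>set rs. 1 \<le> x \<and> x < m"
    and "sum_list rs + s = q * m + \<rho>" "\<rho> < m" "length rs \<le> q"
  shows "Fser m (replicate t m @ rs @ replicate s 1) (sum_list (replicate t m @ rs @ replicate s 1)) $ N
       = of_nat (card {Ps :: bool list list. length Ps = q + 1 \<and>
           (\<exists>us :: nat list. length us = q + 1
              \<and> Ps ! 0 \<in> dyck_set m 0 (m - \<rho> - 1) (us ! 0)
              \<and> (\<forall>i \<in> {1..length rs}. Ps ! i \<in> dyck_set m (rs ! (i - 1)) 0 (us ! i))
              \<and> (\<forall>\<nu> \<in> {length rs + 1..q}. Ps ! \<nu> \<in> dyck_set m 0 0 (us ! \<nu>))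
              \<and> sum_list us = N)})"
  unfolding Fser_family_eq_prod_dyck_gf[OF assms] family_tuples_eq[OF assms(5), symmetric]
  using family_pairs_bounded[of m rs q \<rho>] assms(1,2) by (intro coeff_prod_dyck_gf) auto

lemma Fser_single_part:
  assumes "1 \<le> r" "r + s < m"
  shows "Fser m (replicate t m @ [r] @ replicate s 1) (sum_list (replicate t m @ [r] @ replicate s 1))
    = dyck_gf m r (m - r - s - 1)"
proof -
  have "Fser m (replicate t m @ [r] @ replicate s 1) (sum_list (replicate t m @ [r] @ replicate s 1))
      = pfps (m - r - s - 1) * pfps r * inverse (pfps m)"
    using Fser_family[of m "[r]" s 0 "r + s" t] assms
    by (simp add: pxi_def fps_of_ipoly_mult pfps_def)
  also have "\<dots> = dyck_gf m r (m - r - s - 1)"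
    using assms by (simp add: dyck_gf_eq mult.commute)
  finally show ?thesis .
qed

theorem theorem1p3:
  fixes m :: nat
  assumes "m \<ge> 1"
  shows
  "(\<forall>(xi :: nat list) (mu :: nat) (ab :: (nat \<times> nat) list).
      is_partition_le m xi
      \<and> length (filter (\<lambda>x. x = m) xi) \<le> mu div m + 1
      \<and> length ab = mu div m + 1 - length (filter (\<lambda>x. x = m) xi)
      \<and> (\<forall>(a, b) \<in> set ab. a \<le> m - 1 \<and> b \<le> m - 1 \<and> a + b \<le> m - 1)
      \<and> pp (m - mu mod m - 1) * pxi (filter (\<lambda>x. x < m) xi)
          = prod_list (map (\<lambda>(a, b). pp a * pp b) ab)
    \<longrightarrow> Fser m xi mu
          = prod_list (map (\<lambda>(a, b). Abs_fps (\<lambda>u. of_nat (Dcount m a b u))) ab)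
      \<and> (\<forall>r. fps_nth (Fser m xi mu) r
             = of_nat (card {Ps :: bool list list. length Ps = length ab \<and>
                 (\<exists>us :: nat list. length us = length ab
                    \<and> (\<forall>\<nu> < length ab. Ps ! \<nu> \<in> dyck_set m (fst (ab ! \<nu>)) (snd (ab ! \<nu>)) (us ! \<nu>))
                    \<and> sum_list us = r)}))
      \<and> (\<forall>r. fps_nth (Fser m xi mu) r \<ge> 0))
   \<and>
   (\<forall>t s q \<rho> :: nat. s = q * m + \<rho> \<and> \<rho> < m \<longrightarrow>
      (let xi = replicate t m @ replicate s 1 in
       \<forall>N. fps_nth (Fser m xi (sum_list xi)) N
           = of_nat (card {Ps :: bool list list. length Ps = q + 1 \<and>
               (\<exists>us :: nat list. length us = q + 1
                  \<and> Ps ! 0 \<in> dyck_set m 0 (m - \<rho> - 1) (us ! 0)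
                  \<and> (\<forall>\<nu> \<in> {1..q}. Ps ! \<nu> \<in> dyck_set m 0 0 (us ! \<nu>))
                  \<and> sum_list us = N)})))
   \<and>
   (\<forall>t r s q \<rho> :: nat. 1 \<le> r \<and> r \<le> m - 1 \<and> r + s = q * m + \<rho> \<and> \<rho> < m \<longrightarrow>
      (let xi = replicate t m @ [r] @ replicate s 1 in
       (q = 0 \<longrightarrow> (\<forall>u. fps_nth (Fser m xi (sum_list xi)) u = of_nat (Dcount m r (m - r - s - 1) u)))
       \<and>
       (q \<ge> 1 \<longrightarrow> (\<forall>N. fps_nth (Fser m xi (sum_list xi)) N
           = of_nat (card {Ps :: bool list list. length Ps = q + 1 \<and>
               (\<exists>us :: nat list. length us = q + 1
                  \<and> Ps ! 0 \<in> dyck_set m 0 (m - \<rho> - 1) (us ! 0)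
                  \<and> Ps ! 1 \<in> dyck_set m r 0 (us ! 1)
                  \<and> (\<forall>\<nu> \<in> {2..q}. Ps ! \<nu> \<in> dyck_set m 0 0 (us ! \<nu>))
                  \<and> sum_list us = N)})))))
   \<and>
   (\<forall>(t :: nat) (rs :: nat list) (s :: nat) (q :: nat) (\<rho> :: nat).
      (\<forall>x \<in> set rs. 1 \<le> x \<and> x \<le> m - 1) \<and> sorted_wrt (\<ge>) rs
      \<and> sum_list rs + s = q * m + \<rho> \<and> \<rho> < m \<and> length rs \<le> q \<longrightarrow>
      (let xi = replicate t m @ rs @ replicate s 1 in
       \<forall>N. fps_nth (Fser m xi (sum_list xi)) N
           = of_nat (card {Ps :: bool list list. length Ps = q + 1 \<and>
               (\<exists>us :: nat list. length us = q + 1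
                  \<and> Ps ! 0 \<in> dyck_set m 0 (m - \<rho> - 1) (us ! 0)
                  \<and> (\<forall>i \<in> {1..length rs}. Ps ! i \<in> dyck_set m (rs ! (i - 1)) 0 (us ! i))
                  \<and> (\<forall>\<nu> \<in> {length rs + 1..q}. Ps ! \<nu> \<in> dyck_set m 0 0 (us ! \<nu>))
                  \<and> sum_list us = N)})))"
proof -
  have bounded: "\<forall>(a, b)\<in>set ab. a + b < m"
    if "\<forall>(a, b) \<in> set ab. a \<le> m - 1 \<and> b \<le> m - 1 \<and> a + b \<le> m - 1" for ab :: "(nat \<times> nat) list"
    using that assms by fastforce
  have parts: "\<forall>x\<in>set xi. x \<le> m" if "is_partition_le m xi" for xi
    using that by (simp add: is_partition_le_def)
  show ?thesis
    unfolding Let_def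
    apply (intro conjI allI impI; (elim conjE)?)
    subgoal for xi mu ab
      using Fser_eq_prod_dyck_gf[OF parts _ _ bounded] unfolding dyck_gf_def by blast
    subgoal for xi mu ab r
      using Fser_eq_prod_dyck_gf[OF parts _ _ bounded, of xi mu ab] coeff_prod_dyck_gf[OF bounded, of ab r]
      by simp
    subgoal for xi mu ab r
      using Fser_eq_prod_dyck_gf[OF parts _ _ bounded, of xi mu ab] coeff_prod_dyck_gf[OF bounded, of ab r]
      by simp
    subgoal for t s q \<rho> N
      using Fser_family_nth[OF assms, of "[]" s q \<rho> t N] by simp
    subgoal for t r s q \<rho> u
      using Fser_single_part[of r s m t] by (simp add: dyck_gf_def)
    subgoal for t r s q \<rho> N
      using Fser_family_nth[OF assms, of "[r]" s q \<rho> t N] by (simp add: numeral_2_eq_2)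
    subgoal for t rs s q \<rho> N
      by (rule Fser_family_nth) (use assms in auto)
    done
qed

end
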